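(* Let $q = 2^\ell$ with $\ell \geq 1$, and let $\alpha,\beta \in \mathbb{F}_{q^2}$ be such that the line $\{(\alpha t+\beta, t)\}$ is not tangent to the Hermitian curve $x^q+x=y^{q+1}$. Let $\gamma = \beta+\beta^q$, let $\sigma_0,\dots,\sigma_q$ be the roots of $p(t) = t^{q+1} + \alpha^q t^q + \alpha t + \gamma$, and $P_k = \sum_{i=0}^q \sigma_i^k$. Let $\Gamma$ be the $q\times q$ matrix whose entry in row $i$ and column $j$ (indices $0 \le i,j \le q-1$) is $P_{jq+i}$. Then $$\Gamma = \begin{pmatrix} 1 & \alpha^{2^{\ell-1}} \\ \alpha^{2^{\ell-1}q} & \gamma^{2^{\ell-1}}\end{pmatrix} \otimes \begin{pmatrix} 1 & \alpha^{2^{\ell-2}} \\ \alpha^{2^{\ell-2}q} & \gamma^{2^{\ell-2}}\end{pmatrix}\otimes \cdots \otimes \begin{pmatrix} 1 & \alpha^{2} \\ \alpha^{2q} & \gamma^{2}\end{pmatrix} \otimes \begin{pmatrix} 1 & \alpha \\ \alpha^{q} & \gamma\end{pmatrix},$$ where $\otimes$ denotes the Kronecker product.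
   Context: For an $r\times s$ matrix $A=[a_{ij}]$ and an $m_1 \times m_2$ matrix $B$, the Kronecker product $A\otimes B$ is the $rm_1 \times s m_2$ block matrix whose $(i,j)$ block is $a_{ij}B$. *)

theory Defs
  imports "HOL-Computational_Algebra.Polynomial" "HOL-Library.Cardinality"
begin

text \<open>Matrices are represented as functions nat => nat => 'a together with explicit
  dimensions.\<close>

definition kron :: "(nat \<Rightarrow> nat \<Rightarrow> 'a::times) \<Rightarrow> nat \<Rightarrow> nat \<Rightarrow> (nat \<Rightarrow> nat \<Rightarrow> 'a) \<Rightarrow> nat \<Rightarrow> nat \<Rightarrow> 'a"
  where "kron A m1 m2 B = (\<lambda>i j. A (i div m1) (j div m2) * B (i mod m1) (j mod m2))"

definition herm_factor :: "nat \<Rightarrow> 'a::comm_ring_1 \<Rightarrow> 'a \<Rightarrow> nat \<Rightarrow> nat \<Rightarrow> nat \<Rightarrow> 'a"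
  where "herm_factor q a g k = (\<lambda>i j.
     if i = 0 \<and> j = 0 then 1
     else if i = 0 \<and> j = 1 then a ^ (2 ^ k)
     else if i = 1 \<and> j = 0 then a ^ (2 ^ k * q)
     else if i = 1 \<and> j = 1 then g ^ (2 ^ k)
     else 0)"

fun herm_kron :: "nat \<Rightarrow> 'a::comm_ring_1 \<Rightarrow> 'a \<Rightarrow> nat \<Rightarrow> nat \<Rightarrow> nat \<Rightarrow> 'a" where
  "herm_kron q a g 0 = (\<lambda>i j. if i = 0 \<and> j = 0 then 1 else 0)"
| "herm_kron q a g (Suc n) = kron (herm_factor q a g n) (2 ^ n) (2 ^ n) (herm_kron q a g n)"

definition herm_line_poly :: "nat \<Rightarrow> 'a::comm_ring_1 \<Rightarrow> 'a \<Rightarrow> 'a poly" where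
  "herm_line_poly q a b = [:b, a:] ^ q + [:b, a:] - monom 1 (q + 1)"

text \<open>The line {(a t + b, t)} is tangent to the Hermitian curve x^q + x = y^(q+1)
  (the curve having no point at infinity on such a line) iff it meets the curve with
  multiplicity at least 2 at some (affine) point, i.e. the restricted polynomial has a
  multiple root; this is evaluated in an extension field K (given by the field
  embedding phi) over which that polynomial splits.\<close>
definition herm_line_tangent_in :: "('a::comm_ring_1 \<Rightarrow> 'b::field) \<Rightarrow> nat \<Rightarrow> 'a \<Rightarrow> 'a \<Rightarrow> bool" where
  "herm_line_tangent_in phi q a b \<longleftrightarrow>
     (\<exists>t0. order t0 (map_poly phi (herm_line_poly q a b)) \<ge> 2)"

definition field_embedding :: "('a::field \<Rightarrow> 'b::field) \<Rightarrow> bool" where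
  "field_embedding phi \<longleftrightarrow> phi 0 = 0 \<and> phi 1 = 1 \<and>
     (\<forall>x y. phi (x + y) = phi x + phi y) \<and> (\<forall>x y. phi (x * y) = phi x * phi y)"

end

theory Submission
  imports Defs "HOL-Computational_Algebra.Primes"
begin

(* Write a and g for the images of alpha and gamma in the splitting field.  In characteristic 2,
   and since a^(q^2) = a, the polynomial p(t) equals (t + a^q)^(q+1) + c with c = g + a^(q+1),
   so the shifted roots z = sigma + a^q are the q+1 roots of z^(q+1) = c, distinct because the
   line is not tangent.  Hence the sum of z^k over the roots vanishes unless q+1 divides k, in
   particular for k = s + q t with distinct s, t < q.  On the other hand sigma^(jq+i) = x^i y^j
   with x = z + a^q and y = z^q + a, where x y = g + a z + a^q z^q.  Splitting i and j into
   binary digits and raising this relation to the powers 2^k (a Frobenius map) expresses x^i y^j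
   as the (i, j) entry of the Kronecker product plus multiples of monomials z^(s + q t) with s
   and t built from disjoint sets of binary digits, not both empty; these sum to zero. *)

lemma CHAR_eq_2I:
  assumes "(2::'a::{semiring_1,zero_neq_one}) = 0"
  shows "CHAR('a) = 2"
  by (rule CHAR_eq_posI) (use assms in \<open>auto simp: less_2_cases_iff\<close>)

lemma add_self_CHAR_2:
  assumes "CHAR('a::ring_1) = 2"
  shows "x + x = (0::'a)"
  by (metis add_eq_0_iff2 assms uminus_CHAR_2)

lemma freshmans_dream_CHAR_2:
  fixes x y :: "'a::comm_semiring_1"
  assumes "CHAR('a) = 2"
  shows "(x + y) ^ 2 ^ n = x ^ 2 ^ n + y ^ 2 ^ n"
  by (rule freshmans_dream') (simp_all add: assms)

lemma of_nat_CARD_eq_0: "of_nat CARD('a::{ring_1,finite}) = (0::'a)"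
proof -
  have "(\<Sum>x\<in>UNIV. x) = (\<Sum>x\<in>UNIV. x + (1::'a))"
    by (rule sum.reindex_bij_witness[of _ "\<lambda>x. x + 1" "\<lambda>x. x - 1"]) auto
  then show ?thesis
    by (simp add: sum.distrib)
qed

(* The library's finite_field_power_card_eq_same is stated for the class finite_field,
   which a type variable of sort {field, finite} does not belong to. *)
lemma finite_field_power_CARD:
  fixes x :: "'a::{field,finite}"
  shows "x ^ CARD('a) = x"
proof -
  let ?S = "UNIV - {0::'a}"
  have card: "CARD('a) = Suc (card ?S)"
    using finite_UNIV_card_ge_0[where 'a='a] by (simp add: card_Diff_singleton)
  show ?thesis
  proof (cases "x = 0")
    case False
    have "(\<Prod>y\<in>?S. y) = (\<Prod>y\<in>?S. x * y)"
      by (rule prod.reindex_bij_witness[of _ "\<lambda>y. x * y" "\<lambda>y. y / x"]) (use False in auto)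
    also have "\<dots> = x ^ card ?S * (\<Prod>y\<in>?S. y)"
      by (simp only: prod.distrib prod_constant)
    finally have "x ^ card ?S = 1"
      by simp
    then show ?thesis
      by (simp only: card power_Suc mult_1_right)
  qed (simp only: card power_Suc mult_zero_left)
qed

lemma card_le_if_power_eq:
  fixes A :: "'a::idom set"
  assumes "m > 0" and "\<And>z. z \<in> A \<Longrightarrow> z ^ m = d"
  shows "card A \<le> m"
proof -
  define p :: "'a poly" where "p = monom 1 m - [:d:]"
  have "coeff p m = 1"
    using assms(1) by (simp add: p_def coeff_monom coeff_pCons split: nat.split)
  then have "p \<noteq> 0"
    by auto
  have "degree p \<le> m"
    unfolding p_def by (metis degree_diff_le degree_monom_le degree_pCons_0 le0)
  have "A \<subseteq> {z. poly p z = 0}"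
    using assms(2) by (auto simp: p_def poly_monom)
  then have "card A \<le> card {z. poly p z = 0}"
    by (rule card_mono[OF poly_roots_finite[OF \<open>p \<noteq> 0\<close>]])
  also have "\<dots> \<le> m"
    using card_poly_roots_bound[OF \<open>p \<noteq> 0\<close>] \<open>degree p \<le> m\<close> by linarith
  finally show ?thesis .
qed

lemma sum_power_roots_eq_0:
  fixes c :: "'a::field"
  assumes card: "card {z. z ^ n = c} = n" and m: "0 < m" "m < n"
  shows "(\<Sum>z | z ^ n = c. z ^ m) = 0"
proof -
  define U where "U = {z. z ^ n = c}"
  have "card U > 0"
    using card m by (simp add: U_def)
  then have "finite U" "U \<noteq> {}"
    by (simp_all add: card_gt_0_iff)
  then obtain w0 where w0: "w0 \<in> U"
    by blast
  have "c \<noteq> 0"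
  proof
    assume "c = 0"
    then have "U = {0}"
      using m by (auto simp: U_def)
    then show False
      using card m by (simp add: U_def)
  qed
  then have "w0 \<noteq> 0"
    using w0 m by (auto simp: U_def)
  obtain w where w: "w \<in> U" "w ^ m \<noteq> w0 ^ m"
    using card_le_if_power_eq[of m U "w0 ^ m"] card m by (auto simp: U_def)
  (* multiplication by the n-th root of unity \<zeta> permutes U, but scales the sum by \<zeta>^m \<noteq> 1 *)
  define \<zeta> where "\<zeta> = w / w0"
  have "\<zeta> ^ n = 1"
    using w w0 \<open>c \<noteq> 0\<close> by (simp add: \<zeta>_def U_def power_divide)
  then have "\<zeta> \<noteq> 0"
    using m by (metis order.strict_trans zero_neq_one zero_power)
  have "\<zeta> ^ m \<noteq> 1"
    using w \<open>w0 \<noteq> 0\<close> by (simp add: \<zeta>_def power_divide)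
  have "(\<Sum>z\<in>U. z ^ m) = (\<Sum>z\<in>U. (\<zeta> * z) ^ m)"
    by (rule sum.reindex_bij_witness[of _ "\<lambda>z. \<zeta> * z" "\<lambda>z. z / \<zeta>"])
      (use \<open>\<zeta> ^ n = 1\<close> \<open>\<zeta> \<noteq> 0\<close> in \<open>auto simp: U_def power_divide power_mult_distrib\<close>)
  also have "\<dots> = \<zeta> ^ m * (\<Sum>z\<in>U. z ^ m)"
    by (simp add: power_mult_distrib sum_distrib_left)
  finally have "(1 - \<zeta> ^ m) * (\<Sum>z\<in>U. z ^ m) = 0"
    by (simp add: algebra_simps)
  then show ?thesis
    using \<open>\<zeta> ^ m \<noteq> 1\<close> by (simp add: U_def)
qed

lemma sum_power_roots_eq_0_if_not_dvd:
  fixes c :: "'a::field"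
  assumes card: "card {z. z ^ n = c} = n" and "\<not> n dvd k"
  shows "(\<Sum>z | z ^ n = c. z ^ k) = 0"
proof (cases "n = 0")
  case True
  then have "infinite {z. z ^ n = c} \<or> {z. z ^ n = c} = {}"
    using card by auto
  then show ?thesis
    by auto
next
  case False
  have "z ^ k = c ^ (k div n) * z ^ (k mod n)" if "z ^ n = c" for z
  proof -
    have "z ^ k = (z ^ n) ^ (k div n) * z ^ (k mod n)"
      by (simp only: power_mult[symmetric] power_add[symmetric] mult_div_mod_eq)
    then show ?thesis
      using that by simp
  qed
  then have "(\<Sum>z | z ^ n = c. z ^ k) = (\<Sum>z | z ^ n = c. c ^ (k div n) * z ^ (k mod n))"
    by (intro sum.cong) auto
  also have "\<dots> = c ^ (k div n) * (\<Sum>z | z ^ n = c. z ^ (k mod n))"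
    by (simp add: sum_distrib_left)
  also have "(\<Sum>z | z ^ n = c. z ^ (k mod n)) = 0"
    using assms False by (intro sum_power_roots_eq_0) (auto simp: dvd_eq_mod_eq_0)
  finally show ?thesis
    by simp
qed

lemma not_Suc_dvd_add_mult:
  fixes s t q :: nat
  assumes "s \<le> q" "t \<le> q" "s \<noteq> t"
  shows "\<not> Suc q dvd s + q * t"
proof
  assume "Suc q dvd s + q * t"
  moreover have "int (s + q * t) = (int s - int t) + int (Suc q) * int t"
    by (simp add: algebra_simps)
  ultimately have "int (Suc q) dvd (int s - int t) + int (Suc q) * int t"
    by (metis int_dvd_int_iff)
  then have "int (Suc q) dvd int s - int t"
    by (simp add: dvd_add_left_iff)
  moreover have "int s - int t \<noteq> 0"
    using assms(3) by simp
  ultimately have "\<bar>int (Suc q)\<bar> \<le> \<bar>int s - int t\<bar>"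
    by (rule dvd_imp_le_int[rotated])
  then show False
    using assms(1,2) by linarith
qed

lemma double_dvd_add:
  fixes N s t q :: nat
  assumes s: "2 * N dvd s" and t: "2 * N dvd t" and q: "2 * N dvd q" and "s < q" "N > 0"
  shows "s + N < q" "s + N \<noteq> t"
proof -
  from s q obtain s' q' where s': "s = 2 * N * s'" and q': "q = 2 * N * q'"
    by (auto elim!: dvdE)
  have "s + N < 2 * N * (s' + 1)"
    using s' \<open>N > 0\<close> by simp
  also have "\<dots> \<le> 2 * N * q'"
    using \<open>s < q\<close> unfolding s' q' by (intro mult_le_mono2) simp
  also have "\<dots> = q"
    by (rule q'[symmetric])
  finally show "s + N < q" .
  show "s + N \<noteq> t"
  proof
    assume "s + N = t"
    with t have "2 * N dvd s + N"
      by simp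
    with s have "2 * N dvd N"
      by (simp add: dvd_add_right_iff)
    then show False
      using \<open>N > 0\<close> by (auto dest: dvd_imp_le)
  qed
qed

lemma herm_factor_expansion:
  fixes a g :: "'a::comm_ring_1"
  assumes char: "CHAR('a) = 2" and "i \<le> 1" "j \<le> 1"
  obtains e f where "\<And>x y. (x + a ^ q) * (y + a) = g + a * x + a ^ q * y \<Longrightarrow>
      ((x + a ^ q) ^ 2 ^ n) ^ i * ((y + a) ^ 2 ^ n) ^ j
        = herm_factor q a g n i j + e * x ^ 2 ^ n + f * y ^ 2 ^ n"
proof -
  note frob = freshmans_dream_CHAR_2[OF char]
  have aq: "(a ^ q) ^ 2 ^ n = a ^ (2 ^ n * q)"
    by (simp add: power_mult[symmetric] mult.commute)
  consider "i = 0" "j = 0" | "i = 0" "j = 1" | "i = 1" "j = 0" | "i = 1" "j = 1"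
    using assms(2,3) by linarith
  then show ?thesis
  proof cases
    case 1
    show ?thesis
      by (rule that[of 0 0]) (simp add: 1 herm_factor_def)
  next
    case 2
    show ?thesis
      by (rule that[of 0 1]) (simp add: 2 herm_factor_def frob add.commute)
  next
    case 3
    show ?thesis
      by (rule that[of 1 0]) (simp add: 3 herm_factor_def frob aq add.commute)
  next
    case 4
    show ?thesis
    proof (rule that[of "a ^ 2 ^ n" "a ^ (2 ^ n * q)"])
      fix x y
      assume "(x + a ^ q) * (y + a) = g + a * x + a ^ q * y"
      then have "(x + a ^ q) ^ 2 ^ n * (y + a) ^ 2 ^ n = (g + a * x + a ^ q * y) ^ 2 ^ n"
        by (simp flip: power_mult_distrib)
      then show "((x + a ^ q) ^ 2 ^ n) ^ i * ((y + a) ^ 2 ^ n) ^ j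
          = herm_factor q a g n i j + a ^ 2 ^ n * x ^ 2 ^ n + a ^ (2 ^ n * q) * y ^ 2 ^ n"
        by (simp add: 4 herm_factor_def frob power_mult_distrib aq)
    qed
  qed
qed

(* For z = sigma + a^q in characteristic 2 with a^(q^2) = a, the two last factors are
   sigma^i and sigma^(q j). *)
definition herm_monomial :: "nat \<Rightarrow> 'a::comm_ring_1 \<Rightarrow> nat \<Rightarrow> nat \<Rightarrow> nat \<Rightarrow> nat \<Rightarrow> 'a \<Rightarrow> 'a"
  where "herm_monomial q a s t i j z = z ^ (s + q * t) * (z + a ^ q) ^ i * (z ^ q + a) ^ j"

lemma herm_monomial_expansion:
  fixes a g :: "'a::comm_ring_1"
  assumes char: "CHAR('a) = 2" and "i < 2 * 2 ^ n" "j < 2 * 2 ^ n"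
  obtains e f where "\<And>z. (z + a ^ q) * (z ^ q + a) = g + a * z + a ^ q * z ^ q \<Longrightarrow>
      herm_monomial q a s t i j z
        = herm_factor q a g n (i div 2 ^ n) (j div 2 ^ n)
            * herm_monomial q a s t (i mod 2 ^ n) (j mod 2 ^ n) z
          + e * herm_monomial q a (s + 2 ^ n) t (i mod 2 ^ n) (j mod 2 ^ n) z
          + f * herm_monomial q a s (t + 2 ^ n) (i mod 2 ^ n) (j mod 2 ^ n) z"
proof -
  have "i div 2 ^ n < 2" "j div 2 ^ n < 2"
    using assms(2,3) by (simp_all add: less_mult_imp_div_less)
  then have "i div 2 ^ n \<le> 1" "j div 2 ^ n \<le> 1"
    by simp_all
  then obtain e f where ef: "\<And>x y. (x + a ^ q) * (y + a) = g + a * x + a ^ q * y \<Longrightarrow>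
      ((x + a ^ q) ^ 2 ^ n) ^ (i div 2 ^ n) * ((y + a) ^ 2 ^ n) ^ (j div 2 ^ n)
        = herm_factor q a g n (i div 2 ^ n) (j div 2 ^ n) + e * x ^ 2 ^ n + f * y ^ 2 ^ n"
    using herm_factor_expansion[OF char] by metis
  show ?thesis
  proof (rule that[of e f])
    fix z
    assume curve: "(z + a ^ q) * (z ^ q + a) = g + a * z + a ^ q * z ^ q"
    define X where "X = (z + a ^ q) ^ (i mod 2 ^ n) * (z ^ q + a) ^ (j mod 2 ^ n)"
    have "(z + a ^ q) ^ i * (z ^ q + a) ^ j
        = ((z + a ^ q) ^ 2 ^ n) ^ (i div 2 ^ n) * ((z ^ q + a) ^ 2 ^ n) ^ (j div 2 ^ n) * X"
      unfolding X_def power_mult[symmetric] by (simp add: mult_ac flip: power_add)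
    also have "\<dots> = (herm_factor q a g n (i div 2 ^ n) (j div 2 ^ n)
        + e * z ^ 2 ^ n + f * (z ^ q) ^ 2 ^ n) * X"
      by (simp only: ef[OF curve])
    finally show "herm_monomial q a s t i j z
        = herm_factor q a g n (i div 2 ^ n) (j div 2 ^ n)
            * herm_monomial q a s t (i mod 2 ^ n) (j mod 2 ^ n) z
          + e * herm_monomial q a (s + 2 ^ n) t (i mod 2 ^ n) (j mod 2 ^ n) z
          + f * herm_monomial q a s (t + 2 ^ n) (i mod 2 ^ n) (j mod 2 ^ n) z"
      unfolding herm_monomial_def X_def by (simp add: algebra_simps power_add power_mult)
  qed
qed

(* The factor z^(s + q t) carries the binary digits of i and j above position n that have
   already been split off; s and t consist of such digits at disjoint positions, whence the
   hypothesis s = t \<Longrightarrow> s = 0. *)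
lemma sum_herm_monomial_eq_herm_kron:
  fixes U :: "'a::comm_ring_1 set" and a g :: 'a
  assumes char: "CHAR('a) = 2" and q: "q = 2 ^ l"
    and card: "of_nat (card U) = (1::'a)"
    and curve: "\<And>z. z \<in> U \<Longrightarrow> (z + a ^ q) * (z ^ q + a) = g + a * z + a ^ q * z ^ q"
    and vanish: "\<And>s t. s < q \<Longrightarrow> t < q \<Longrightarrow> s \<noteq> t \<Longrightarrow> (\<Sum>z\<in>U. z ^ (s + q * t)) = 0"
  shows "n \<le> l \<Longrightarrow> i < 2 ^ n \<Longrightarrow> j < 2 ^ n \<Longrightarrow> s < q \<Longrightarrow> t < q \<Longrightarrow>
    2 ^ n dvd s \<Longrightarrow> 2 ^ n dvd t \<Longrightarrow> (s = t \<Longrightarrow> s = 0) \<Longrightarrow>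
    (\<Sum>z\<in>U. herm_monomial q a s t i j z) = (if s = 0 \<and> t = 0 then herm_kron q a g n i j else 0)"
proof (induction n arbitrary: i j s t)
  case 0
  then show ?case
    using card vanish[of s t] by (cases "s = 0 \<and> t = 0") (auto simp: herm_monomial_def)
next
  case (Suc n)
  define F where "F s t = (\<Sum>z\<in>U. herm_monomial q a s t (i mod 2 ^ n) (j mod 2 ^ n) z)" for s t
  have IH: "F s' t' = (if s' = 0 \<and> t' = 0 then herm_kron q a g n (i mod 2 ^ n) (j mod 2 ^ n) else 0)"
    if "s' < q" "t' < q" "2 ^ n dvd s'" "2 ^ n dvd t'" "s' = t' \<Longrightarrow> s' = 0" for s' t'
    unfolding F_def by (rule Suc.IH) (use Suc.prems(1) that in auto)
  have dvd: "2 * 2 ^ n dvd s" "2 * 2 ^ n dvd t" "2 * 2 ^ n dvd q"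
    using Suc.prems(1,6,7) q by (simp_all add: le_imp_power_dvd flip: power_Suc)
  then have dvd': "2 ^ n dvd s" "2 ^ n dvd t"
    by (simp_all add: dvd_mult_right)
  obtain e f where expand: "\<And>z. (z + a ^ q) * (z ^ q + a) = g + a * z + a ^ q * z ^ q \<Longrightarrow>
      herm_monomial q a s t i j z
        = herm_factor q a g n (i div 2 ^ n) (j div 2 ^ n)
            * herm_monomial q a s t (i mod 2 ^ n) (j mod 2 ^ n) z
          + e * herm_monomial q a (s + 2 ^ n) t (i mod 2 ^ n) (j mod 2 ^ n) z
          + f * herm_monomial q a s (t + 2 ^ n) (i mod 2 ^ n) (j mod 2 ^ n) z"
    using herm_monomial_expansion[OF char] Suc.prems(2,3) by (metis power_Suc)
  have "(\<Sum>z\<in>U. herm_monomial q a s t i j z)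
      = herm_factor q a g n (i div 2 ^ n) (j div 2 ^ n) * F s t + e * F (s + 2 ^ n) t + f * F s (t + 2 ^ n)"
    unfolding F_def by (simp add: expand curve sum.distrib sum_distrib_left cong: sum.cong)
  also have "F (s + 2 ^ n) t = 0"
    using double_dvd_add[OF dvd Suc.prems(4)] Suc.prems(5) dvd' by (subst IH) auto
  also have "F s (t + 2 ^ n) = 0"
    using double_dvd_add[OF dvd(2,1,3) Suc.prems(5)] Suc.prems(4) dvd' by (subst IH) auto
  also have "F s t = (if s = 0 \<and> t = 0 then herm_kron q a g n (i mod 2 ^ n) (j mod 2 ^ n) else 0)"
    using Suc.prems(4,5,8) dvd' by (intro IH)
  finally show ?case
    by (simp add: kron_def)
qed

lemma poly_hermitian_shift:
  fixes a g t :: "'a::comm_ring_1"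
  assumes char: "CHAR('a) = 2" and q: "q = 2 ^ l" and a: "a ^ (q * q) = a"
  shows "poly (monom 1 (q + 1) + monom (a ^ q) q + monom a 1 + [:g:]) (t + a ^ q)
    = t ^ (q + 1) + g + a ^ (q + 1)"
proof -
  have "(t + a ^ q) ^ q = t ^ q + a"
    using freshmans_dream_CHAR_2[OF char] a by (simp add: q flip: power_mult)
  then have "poly (monom 1 (q + 1) + monom (a ^ q) q + monom a 1 + [:g:]) (t + a ^ q)
      = (t + a ^ q) * (t ^ q + a) + a ^ q * (t ^ q + a) + a * (t + a ^ q) + g"
    by (simp add: poly_monom)
  also have "\<dots> = t ^ (q + 1) + g + a ^ (q + 1) + 2 * (a * t + a ^ q * t ^ q + a ^ (q + 1))"
    by (simp add: algebra_simps)
  also have "\<dots> = t ^ (q + 1) + g + a ^ (q + 1)"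
    using of_nat_CHAR[where 'a='a] char by simp
  finally show ?thesis .
qed

lemma bij_betw_shifted_hermitian_roots:
  fixes a g :: "'a::idom" and \<sigma> :: "nat \<Rightarrow> 'a"
  assumes char: "CHAR('a) = 2" and q: "q = 2 ^ l" and a: "a ^ (q * q) = a"
    and roots: "(\<Prod>r\<le>q. [:- \<sigma> r, 1:]) = monom 1 (q + 1) + monom (a ^ q) q + monom a 1 + [:g:]"
    and inj: "inj_on \<sigma> {..q}"
  shows "bij_betw (\<lambda>r. \<sigma> r + a ^ q) {..q} {z. z ^ (q + 1) = g + a ^ (q + 1)}"
proof (rule bij_betw_imageI)
  show "inj_on (\<lambda>r. \<sigma> r + a ^ q) {..q}"
    using inj by (auto simp: inj_on_def)
  have shift_eq: "x + a ^ q = y \<longleftrightarrow> x = y + a ^ q" for x y :: 'a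
    using add_self_CHAR_2[OF char, of "a ^ q"] by (auto simp: add.assoc)
  have "z ^ (q + 1) = g + a ^ (q + 1) \<longleftrightarrow> (\<exists>r\<le>q. z + a ^ q = \<sigma> r)" for z
  proof -
    have "poly (\<Prod>r\<le>q. [:- \<sigma> r, 1:]) (z + a ^ q) = z ^ (q + 1) + (g + a ^ (q + 1))"
      unfolding roots poly_hermitian_shift[OF char q a] by (simp only: add.assoc)
    then have "z ^ (q + 1) = g + a ^ (q + 1) \<longleftrightarrow> poly (\<Prod>r\<le>q. [:- \<sigma> r, 1:]) (z + a ^ q) = 0"
      by (simp add: add_eq_0_iff2 uminus_CHAR_2[OF char])
    then show ?thesis
      by (auto simp: poly_prod prod_zero_iff)
  qed
  then show "(\<lambda>r. \<sigma> r + a ^ q) ` {..q} = {z. z ^ (q + 1) = g + a ^ (q + 1)}"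
    by (auto simp: shift_eq)
qed

lemma power_sum_hermitian_roots:
  fixes a g :: "'a::field" and \<sigma> :: "nat \<Rightarrow> 'a"
  assumes char: "CHAR('a) = 2" and l: "l \<ge> 1" and q: "q = 2 ^ l" and a: "a ^ (q * q) = a"
    and roots: "(\<Prod>r\<le>q. [:- \<sigma> r, 1:]) = monom 1 (q + 1) + monom (a ^ q) q + monom a 1 + [:g:]"
    and inj: "inj_on \<sigma> {..q}" and ij: "i < q" "j < q"
  shows "(\<Sum>r\<le>q. \<sigma> r ^ (j * q + i)) = herm_kron q a g l i j"
proof -
  define U where "U = {z. z ^ (q + 1) = g + a ^ (q + 1)}"
  have bij: "bij_betw (\<lambda>r. \<sigma> r + a ^ q) {..q} U"
    unfolding U_def using char q a roots inj by (rule bij_betw_shifted_hermitian_roots)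
  then have card: "card U = q + 1"
    by (simp add: bij_betw_same_card[symmetric])
  have "(2::'a) = 0"
    using of_nat_CHAR[where 'a='a] char by simp
  then have "of_nat q = (0::'a)"
    using l by (simp add: q)
  then have card_eq_1: "of_nat (card U) = (1::'a)"
    by (simp add: card)
  have curve: "(z + a ^ q) * (z ^ q + a) = g + a * z + a ^ q * z ^ q" if "z \<in> U" for z
  proof -
    have "(z + a ^ q) * (z ^ q + a) = z ^ (q + 1) + a * z + a ^ q * z ^ q + a ^ (q + 1)"
      by (simp add: algebra_simps)
    also have "\<dots> = g + a * z + a ^ q * z ^ q + (a ^ (q + 1) + a ^ (q + 1))"
      using that by (simp add: U_def algebra_simps)
    finally show ?thesis
      by (simp add: add_self_CHAR_2[OF char])
  qed
  have vanish: "(\<Sum>z\<in>U. z ^ (s + q * t)) = 0" if "s < q" "t < q" "s \<noteq> t" for s t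
    unfolding U_def using card that not_Suc_dvd_add_mult[of s q t]
    by (intro sum_power_roots_eq_0_if_not_dvd) (auto simp: U_def)
  have shift_back: "\<sigma> r = (\<sigma> r + a ^ q) + a ^ q" "\<sigma> r ^ q = (\<sigma> r + a ^ q) ^ q + a" for r
    using freshmans_dream_CHAR_2[OF char] a add_self_CHAR_2[OF char]
    by (simp_all add: q add.assoc flip: power_mult)
  have "(\<Sum>r\<le>q. \<sigma> r ^ (j * q + i)) = (\<Sum>r\<le>q. herm_monomial q a 0 0 i j (\<sigma> r + a ^ q))"
    unfolding herm_monomial_def
    by (simp only: shift_back[symmetric] flip: power_mult) (simp add: power_add mult.commute)
  also have "\<dots> = (\<Sum>z\<in>U. herm_monomial q a 0 0 i j z)"
    by (rule sum.reindex_bij_betw[OF bij])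
  also have "\<dots> = herm_kron q a g l i j"
    using sum_herm_monomial_eq_herm_kron[OF char q card_eq_1 curve vanish, of l i j 0 0] ij q by simp
  finally show ?thesis .
qed

lemma herm_line_poly_CHAR_2:
  fixes a b :: "'a::comm_ring_1"
  assumes char: "CHAR('a) = 2" and q: "q = 2 ^ l"
  shows "herm_line_poly q a b = monom 1 (q + 1) + monom (a ^ q) q + monom a 1 + [:b + b ^ q:]"
proof -
  have line: "[:b, a:] = [:b:] + monom a 1"
    by (simp add: monom_Suc monom_0)
  have "[:b, a:] ^ q = [:b ^ q:] + monom (a ^ q) q"
    unfolding line q using char by (simp add: freshmans_dream_CHAR_2 poly_const_pow monom_power)
  then show ?thesis
    using char by (simp add: herm_line_poly_def minus_CHAR_2 line add_ac)
qed

lemma inj_on_if_order_prod_less_2: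
  fixes \<sigma> :: "'i \<Rightarrow> 'a::idom"
  assumes "finite A" and order: "\<And>t. order t (\<Prod>i\<in>A. [:- \<sigma> i, 1:]) < 2"
  shows "inj_on \<sigma> A"
proof (rule inj_onI, rule ccontr)
  fix r s
  assume "r \<in> A" "s \<in> A" "\<sigma> r = \<sigma> s" "r \<noteq> s"
  then have "(\<Prod>i\<in>A. [:- \<sigma> i, 1:]) = (\<Prod>i\<in>A - {r, s}. [:- \<sigma> i, 1:]) * [:- \<sigma> r, 1:] ^ 2"
    using prod.subset_diff[of "{r, s}" A "\<lambda>i. [:- \<sigma> i, 1:]"] \<open>finite A\<close>
    by (simp add: power2_eq_square)
  then have "[:- \<sigma> r, 1:] ^ 2 dvd (\<Prod>i\<in>A. [:- \<sigma> i, 1:])"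
    by simp
  then have "2 \<le> order (\<sigma> r) (\<Prod>i\<in>A. [:- \<sigma> i, 1:])"
    using \<open>finite A\<close> by (simp add: order_divides)
  then show False
    using order[of "\<sigma> r"] by simp
qed

lemma field_embedding_hom:
  assumes "field_embedding phi"
  shows "phi 0 = 0" "phi 1 = 1" "phi (x + y) = phi x + phi y" "phi (x * y) = phi x * phi y"
  using assms by (simp_all add: field_embedding_def)

lemma field_embedding_power:
  assumes "field_embedding phi"
  shows "phi (x ^ n) = phi x ^ n"
  by (induction n) (simp_all add: field_embedding_hom[OF assms])

lemma map_poly_add_field_embedding:
  assumes "field_embedding phi"
  shows "map_poly phi (p + r) = map_poly phi p + map_poly phi r"
  by (rule poly_eqI) (simp add: coeff_map_poly field_embedding_hom[OF assms])

lemma field_embedding_herm_kron: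
  assumes emb: "field_embedding phi"
  shows "phi (herm_kron q a g n i j) = herm_kron q (phi a) (phi g) n i j"
proof (induction n arbitrary: i j)
  case 0
  then show ?case
    by (simp add: field_embedding_hom[OF emb])
next
  case (Suc n)
  have "phi (herm_factor q a g n i' j') = herm_factor q (phi a) (phi g) n i' j'" for i' j'
    by (simp add: herm_factor_def field_embedding_hom[OF emb] field_embedding_power[OF emb])
  then show ?case
    by (simp add: kron_def field_embedding_hom(4)[OF emb] Suc.IH)
qed

theorem mainTheorem6:
  fixes l q :: nat
    and \<alpha> \<beta> :: "'a::{field, finite}"
    and phi :: "'a \<Rightarrow> 'b::field"
    and \<sigma> :: "nat \<Rightarrow> 'b"
  assumes l: "l \<ge> 1"
    and q: "q = 2 ^ l"
    and card: "CARD('a) = q ^ 2"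
    and emb: "field_embedding phi"
    and roots: "map_poly phi (monom 1 (q + 1) + monom (\<alpha> ^ q) q + monom \<alpha> 1 + [:\<beta> + \<beta> ^ q:])
                = (\<Prod>i\<le>q. [:- \<sigma> i, 1:])"
    and not_tangent: "\<not> herm_line_tangent_in phi q \<alpha> \<beta>"
  shows "\<forall>i<q. \<forall>j<q.
           (\<Sum>r\<le>q. \<sigma> r ^ (j * q + i)) = phi (herm_kron q \<alpha> (\<beta> + \<beta> ^ q) l i j)"
proof -
  have "(2::'a) = 0"
    using of_nat_CARD_eq_0[where 'a='a] card q by simp
  then have char_a: "CHAR('a) = 2"
    by (rule CHAR_eq_2I)
  from \<open>(2::'a) = 0\<close> have "(2::'b) = 0"
    using field_embedding_hom[OF emb] by (metis one_add_one)
  then have char_b: "CHAR('b) = 2"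
    by (rule CHAR_eq_2I)
  have a: "phi \<alpha> ^ (q * q) = phi \<alpha>"
    using finite_field_power_CARD[of \<alpha>] card
    by (simp add: power2_eq_square flip: field_embedding_power[OF emb])
  have roots': "(\<Prod>r\<le>q. [:- \<sigma> r, 1:])
      = monom 1 (q + 1) + monom (phi \<alpha> ^ q) q + monom (phi \<alpha>) 1 + [:phi (\<beta> + \<beta> ^ q):]"
    using roots by (simp add: map_poly_add_field_embedding[OF emb] map_poly_monom map_poly_pCons
        field_embedding_hom[OF emb] field_embedding_power[OF emb])
  have inj: "inj_on \<sigma> {..q}"
    using not_tangent roots by (intro inj_on_if_order_prod_less_2)
      (auto simp: herm_line_tangent_in_def herm_line_poly_CHAR_2[OF char_a q] not_le)
  show ?thesis
    using power_sum_hermitian_roots[OF char_b l q a roots' inj]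
    by (simp add: field_embedding_herm_kron[OF emb])
qed

end
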